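(* Let $T\in\{0,1\}$, $X\in\mathcal{X}\subset\mathbb{R}^d$ and real-valued potential outcomes $Y_0,Y_1$ be random variables on a common probability space, and let $p_F$ be the law of $(X,T,Y_T)$ and $p_{CF}$ the law of $(X,1-T,Y_{1-T})$. Let $B\sim\mathrm{Bernoulli}(1/2)$ be independent of $(X,T,Y_0,Y_1)$, let $S=T$ if $B=1$ and $S=1-T$ if $B=0$, let $p_{IF}$ be the law of $(X,S,Y_S)$ (so $p_{IF}=\tfrac12 p_F+\tfrac12 p_{CF}$, the ideal factual distribution) and $p_{ICF}$ the law of $(X,1-S,Y_{1-S})$ (its counterfactual distribution). Then for every measurable $h:\mathcal{X}\times\{0,1\}\to\mathbb{R}$, $\mathcal{L}_{p_{IF}}(h)=\mathcal{L}_{p_{ICF}}(h)$, where for a law $p$ of a triple $(X',T',Y')$, $\mathcal{L}_p(h)=\int (y-h(x,t))^2\,p(x,t,y)\,dx\,dt\,dy=\mathbb{E}[(Y'-h(X',T'))^2]\in[0,\infty]$.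
   Context: Potential-outcomes setting: $Y_t$ is the outcome that would be observed under treatment $t$; the counterfactual distribution of a factual law of $(X,T,Y_T)$ is the law obtained by inverting the treatment assignment, i.e. of $(X,1-T,Y_{1-T})$. *)

theory Defs
  imports "HOL-Probability.Probability"
begin

definition po :: "('a \<Rightarrow> real) \<Rightarrow> ('a \<Rightarrow> real) \<Rightarrow> ('a \<Rightarrow> nat) \<Rightarrow> 'a \<Rightarrow> real" where
  "po Y0 Y1 t \<omega> = (if t \<omega> = 0 then Y0 \<omega> else Y1 \<omega>)"

definition triple_space :: "'d::euclidean_space set \<Rightarrow> ('d \<times> nat \<times> real) measure" where
  "triple_space Xs = restrict_space borel Xs \<Otimes>\<^sub>M count_space {0,1} \<Otimes>\<^sub>M (borel :: real measure)"

definition triple_law ::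
  "'a measure \<Rightarrow> 'd::euclidean_space set \<Rightarrow> ('a \<Rightarrow> 'd) \<Rightarrow> ('a \<Rightarrow> nat) \<Rightarrow> ('a \<Rightarrow> real)
     \<Rightarrow> ('d \<times> nat \<times> real) measure" where
  "triple_law M Xs X' T' Y' = distr M (triple_space Xs) (\<lambda>\<omega>. (X' \<omega>, T' \<omega>, Y' \<omega>))"

definition sq_loss :: "('d \<times> nat \<times> real) measure \<Rightarrow> ('d \<times> nat \<Rightarrow> real) \<Rightarrow> ennreal" where
  "sq_loss p h = (\<integral>\<^sup>+ z. ennreal ((snd (snd z) - h (fst z, fst (snd z)))\<^sup>2) \<partial>p)"

end

theory Submission
  imports Defs
begin

text \<open>Both losses are expectations of one function of the coin B and of Z = (X, T, Y0, Y1):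
  the squared loss of h at the treatment selected by the coin (T on heads, 1 - T on tails),
  evaluated once at B and once at \<not> B, because 1 - S is exactly the treatment selected by \<not> B.
  As B is a fair coin independent of Z, the pairs (B, Z) and (\<not> B, Z) have the same law, namely
  the product of the fair Bernoulli law with the law of Z, so the two expectations agree.\<close>

lemma (in prob_space) indep_set_mono:
  assumes "indep_set A B" and "A' \<subseteq> A" and "B' \<subseteq> B"
  shows "indep_set A' B'"
  using assms unfolding indep_sets2_eq by blast

lemma (in prob_space) distr_pair_eq_pair_measure_if_indep_set:
  assumes X: "random_variable S X" and Y: "random_variable T Y"
    and indep: "indep_set {X -` A \<inter> space M | A. A \<in> sets S} {Y -` A \<inter> space M | A. A \<in> sets T}"
  shows "distr M (S \<Otimes>\<^sub>M T) (\<lambda>\<omega>. (X \<omega>, Y \<omega>)) = distr M S X \<Otimes>\<^sub>M distr M T Y"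
proof (rule pair_measure_eqI[symmetric])
  interpret S: prob_space "distr M S X" using X by (rule prob_space_distr)
  interpret T: prob_space "distr M T Y" using Y by (rule prob_space_distr)
  show "sigma_finite_measure (distr M S X)" "sigma_finite_measure (distr M T Y)"
    by unfold_locales
  show "sets (distr M S X \<Otimes>\<^sub>M distr M T Y) = sets (distr M (S \<Otimes>\<^sub>M T) (\<lambda>\<omega>. (X \<omega>, Y \<omega>)))"
    unfolding sets_distr by (rule sets_pair_measure_cong) simp_all
next
  fix A C assume "A \<in> sets (distr M S X)" and "C \<in> sets (distr M T Y)"
  then have A: "A \<in> sets S" and C: "C \<in> sets T" by simp_all
  have "(\<lambda>\<omega>. (X \<omega>, Y \<omega>)) -` (A \<times> C) \<inter> space M = (X -` A \<inter> space M) \<inter> (Y -` C \<inter> space M)"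
    by auto
  moreover have "prob ((X -` A \<inter> space M) \<inter> (Y -` C \<inter> space M)) = prob (X -` A \<inter> space M) * prob (Y -` C \<inter> space M)"
    using A C by (intro indep_setD[OF indep]) auto
  ultimately show "emeasure (distr M S X) A * emeasure (distr M T Y) C
      = emeasure (distr M (S \<Otimes>\<^sub>M T) (\<lambda>\<omega>. (X \<omega>, Y \<omega>))) (A \<times> C)"
    using X Y A C by (simp add: emeasure_distr emeasure_eq_measure ennreal_mult measurable_sets)
qed

lemma (in prob_space) distr_Not_eq_distr_if_fair:
  assumes B: "random_variable (count_space UNIV) B"
    and fair: "prob {\<omega> \<in> space M. B \<omega>} = 1/2"
  shows "distr M (count_space UNIV) (\<lambda>\<omega>. \<not> B \<omega>) = distr M (count_space UNIV) B"
proof (rule measure_eqI_finite[where A = UNIV])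
  have heads: "{\<omega> \<in> space M. B \<omega>} \<in> events"
    using B by measurable
  have "{\<omega> \<in> space M. \<not> B \<omega>} = space M - {\<omega> \<in> space M. B \<omega>}"
    by auto
  then have tails: "prob {\<omega> \<in> space M. \<not> B \<omega>} = 1/2"
    using prob_compl[OF heads] fair by simp
  have notB: "random_variable (count_space UNIV) (\<lambda>\<omega>. \<not> B \<omega>)"
    using B by measurable
  have distr_singleton: "emeasure (distr M (count_space UNIV) C) {b} = prob {\<omega> \<in> space M. C \<omega> = b}"
    if "random_variable (count_space UNIV) C" for C :: "'a \<Rightarrow> bool" and b
    using that by (simp add: emeasure_distr emeasure_eq_measure vimage_def Int_def conj_commute)
  fix b :: bool
  show "emeasure (distr M (count_space UNIV) (\<lambda>\<omega>. \<not> B \<omega>)) {b} = emeasure (distr M (count_space UNIV) B) {b}"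
    using tails fair by (cases b) (simp_all add: distr_singleton[OF B] distr_singleton[OF notB])
qed simp_all

lemma (in prob_space) distr_pair_Not_eq_if_fair_indep:
  assumes B: "random_variable (count_space UNIV) B" and Z: "random_variable N Z"
    and indep: "indep_set {B -` A \<inter> space M | A. A \<in> sets (count_space UNIV)} {Z -` A \<inter> space M | A. A \<in> sets N}"
    and fair: "prob {\<omega> \<in> space M. B \<omega>} = 1/2"
  shows "distr M (count_space UNIV \<Otimes>\<^sub>M N) (\<lambda>\<omega>. (\<not> B \<omega>, Z \<omega>))
       = distr M (count_space UNIV \<Otimes>\<^sub>M N) (\<lambda>\<omega>. (B \<omega>, Z \<omega>))"
proof -
  have notB: "random_variable (count_space UNIV) (\<lambda>\<omega>. \<not> B \<omega>)"
    using B by measurable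
  have "{(\<lambda>\<omega>. \<not> B \<omega>) -` A \<inter> space M | A. A \<in> sets (count_space UNIV)}
      \<subseteq> {B -` A \<inter> space M | A. A \<in> sets (count_space UNIV)}"
  proof safe
    fix A :: "bool set"
    have "(\<lambda>\<omega>. \<not> B \<omega>) -` A \<inter> space M = B -` (Not -` A) \<inter> space M"
      by auto
    then show "\<exists>A'. (\<lambda>\<omega>. \<not> B \<omega>) -` A \<inter> space M = B -` A' \<inter> space M \<and> A' \<in> sets (count_space UNIV)"
      by (intro exI[of _ "Not -` A"]) simp
  qed
  then have indep_notB: "indep_set {(\<lambda>\<omega>. \<not> B \<omega>) -` A \<inter> space M | A. A \<in> sets (count_space UNIV)}
      {Z -` A \<inter> space M | A. A \<in> sets N}"
    by (rule indep_set_mono[OF indep]) simp_all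
  have "distr M (count_space UNIV \<Otimes>\<^sub>M N) (\<lambda>\<omega>. (\<not> B \<omega>, Z \<omega>))
      = distr M (count_space UNIV) (\<lambda>\<omega>. \<not> B \<omega>) \<Otimes>\<^sub>M distr M N Z"
    using notB Z indep_notB by (rule distr_pair_eq_pair_measure_if_indep_set)
  also have "\<dots> = distr M (count_space UNIV) B \<Otimes>\<^sub>M distr M N Z"
    using B fair by (simp add: distr_Not_eq_distr_if_fair)
  also have "\<dots> = distr M (count_space UNIV \<Otimes>\<^sub>M N) (\<lambda>\<omega>. (B \<omega>, Z \<omega>))"
    using B Z indep by (rule distr_pair_eq_pair_measure_if_indep_set[symmetric])
  finally show ?thesis .
qed

lemma (in prob_space) nn_integral_Not_eq_if_fair_indep:
  assumes B: "random_variable (count_space UNIV) B" and Z: "random_variable N Z"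
    and indep: "indep_set {B -` A \<inter> space M | A. A \<in> sets (count_space UNIV)} {Z -` A \<inter> space M | A. A \<in> sets N}"
    and fair: "prob {\<omega> \<in> space M. B \<omega>} = 1/2"
    and G: "G \<in> borel_measurable (count_space UNIV \<Otimes>\<^sub>M N)"
  shows "(\<integral>\<^sup>+ \<omega>. G (\<not> B \<omega>, Z \<omega>) \<partial>M) = (\<integral>\<^sup>+ \<omega>. G (B \<omega>, Z \<omega>) \<partial>M)"
proof -
  note [measurable] = B Z
  have "(\<integral>\<^sup>+ \<omega>. G (\<not> B \<omega>, Z \<omega>) \<partial>M)
      = (\<integral>\<^sup>+ w. G w \<partial>distr M (count_space UNIV \<Otimes>\<^sub>M N) (\<lambda>\<omega>. (\<not> B \<omega>, Z \<omega>)))"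
    using G by (simp add: nn_integral_distr)
  also have "\<dots> = (\<integral>\<^sup>+ w. G w \<partial>distr M (count_space UNIV \<Otimes>\<^sub>M N) (\<lambda>\<omega>. (B \<omega>, Z \<omega>)))"
    using B Z indep fair by (simp add: distr_pair_Not_eq_if_fair_indep)
  also have "\<dots> = (\<integral>\<^sup>+ \<omega>. G (B \<omega>, Z \<omega>) \<partial>M)"
    using G by (simp add: nn_integral_distr)
  finally show ?thesis .
qed

lemma measurable_one_minus_binary[measurable]:
  "(\<lambda>t::nat. 1 - t) \<in> count_space {0,1} \<rightarrow>\<^sub>M count_space {0,1}"
  by auto

lemma borel_measurable_po:
  assumes "T \<in> M \<rightarrow>\<^sub>M count_space {0,1}" and "Y0 \<in> borel_measurable M" and "Y1 \<in> borel_measurable M"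
  shows "po Y0 Y1 T \<in> borel_measurable M"
  using assms unfolding po_def by measurable

lemma sq_loss_triple_law:
  assumes [measurable]: "X \<in> M \<rightarrow>\<^sub>M restrict_space borel Xs" "S \<in> M \<rightarrow>\<^sub>M count_space {0,1}"
    "Y \<in> borel_measurable M" "h \<in> borel_measurable (restrict_space borel Xs \<Otimes>\<^sub>M count_space {0,1})"
  shows "sq_loss (triple_law M Xs X S Y) h = (\<integral>\<^sup>+ \<omega>. ennreal ((Y \<omega> - h (X \<omega>, S \<omega>))\<^sup>2) \<partial>M)"
proof -
  have "(\<lambda>\<omega>. (X \<omega>, S \<omega>, Y \<omega>)) \<in> M \<rightarrow>\<^sub>M triple_space Xs"
    unfolding triple_space_def by measurable
  moreover have "(\<lambda>z. ennreal ((snd (snd z) - h (fst z, fst (snd z)))\<^sup>2)) \<in> borel_measurable (triple_space Xs)"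
    unfolding triple_space_def by measurable
  ultimately show ?thesis
    by (simp add: sq_loss_def triple_law_def nn_integral_distr)
qed

definition coin_sq_loss :: "('d \<times> nat \<Rightarrow> real) \<Rightarrow> bool \<times> 'd \<times> nat \<times> real \<times> real \<Rightarrow> ennreal" where
  "coin_sq_loss h = (\<lambda>(b, x, t, y0, y1). let s = if b then t else 1 - t
                       in ennreal (((if s = 0 then y0 else y1) - h (x, s))\<^sup>2))"

lemma borel_measurable_coin_sq_loss:
  assumes [measurable]: "h \<in> borel_measurable (restrict_space borel Xs \<Otimes>\<^sub>M count_space {0,1})"
  shows "coin_sq_loss h \<in> borel_measurable
           (count_space UNIV \<Otimes>\<^sub>M (restrict_space borel Xs \<Otimes>\<^sub>M count_space {0,1} \<Otimes>\<^sub>M (borel \<Otimes>\<^sub>M borel)))"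
proof (rule measurable_pair_measure_countable1)
  fix b :: bool
  show "(\<lambda>w. coin_sq_loss h (b, w))
      \<in> borel_measurable (restrict_space borel Xs \<Otimes>\<^sub>M count_space {0,1} \<Otimes>\<^sub>M (borel \<Otimes>\<^sub>M borel))"
    unfolding coin_sq_loss_def Let_def prod.case by measurable
qed simp

lemma sq_loss_triple_law_coin:
  assumes "X \<in> M \<rightarrow>\<^sub>M restrict_space borel Xs" and S: "S \<in> M \<rightarrow>\<^sub>M count_space {0,1}"
    and "Y0 \<in> borel_measurable M" and "Y1 \<in> borel_measurable M"
    and "h \<in> borel_measurable (restrict_space borel Xs \<Otimes>\<^sub>M count_space {0,1})"
    and coin: "\<And>\<omega>. \<omega> \<in> space M \<Longrightarrow> S \<omega> = (if C \<omega> then T \<omega> else 1 - T \<omega>)"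
  shows "sq_loss (triple_law M Xs X S (po Y0 Y1 S)) h
       = (\<integral>\<^sup>+ \<omega>. coin_sq_loss h (C \<omega>, X \<omega>, T \<omega>, Y0 \<omega>, Y1 \<omega>) \<partial>M)"
  unfolding sq_loss_triple_law[OF assms(1) S borel_measurable_po[OF S assms(3,4)] assms(5)]
  by (intro nn_integral_cong) (simp add: coin po_def coin_sq_loss_def Let_def)

theorem lemma3:
  fixes M :: "'a measure"
    and Xs :: "'d::euclidean_space set"
    and X :: "'a \<Rightarrow> 'd" and T :: "'a \<Rightarrow> nat" and Y0 Y1 :: "'a \<Rightarrow> real"
    and B :: "'a \<Rightarrow> bool"
    and h :: "'d \<times> nat \<Rightarrow> real"
  assumes "prob_space M"
    and "Xs \<in> sets borel"
    and "X \<in> M \<rightarrow>\<^sub>M restrict_space borel Xs"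
    and "T \<in> M \<rightarrow>\<^sub>M count_space {0,1}"
    and "Y0 \<in> borel_measurable M" and "Y1 \<in> borel_measurable M"
    and "B \<in> M \<rightarrow>\<^sub>M count_space UNIV"
    and "prob_space.indep_set M
           {B -` A \<inter> space M | A. A \<in> sets (count_space UNIV)}
           {(\<lambda>\<omega>. (X \<omega>, T \<omega>, Y0 \<omega>, Y1 \<omega>)) -` A \<inter> space M | A.
              A \<in> sets (restrict_space borel Xs \<Otimes>\<^sub>M count_space {0,1} \<Otimes>\<^sub>M (borel \<Otimes>\<^sub>M borel))}"
    and "measure M {\<omega> \<in> space M. B \<omega>} = 1/2"
    and "h \<in> borel_measurable (restrict_space borel Xs \<Otimes>\<^sub>M count_space {0,1})"
  defines "S \<equiv> (\<lambda>\<omega>. if B \<omega> then T \<omega> else 1 - T \<omega>)"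
  shows "sq_loss (triple_law M Xs X S (po Y0 Y1 S)) h
       = sq_loss (triple_law M Xs X (\<lambda>\<omega>. 1 - S \<omega>) (po Y0 Y1 (\<lambda>\<omega>. 1 - S \<omega>))) h"
proof -
  interpret prob_space M by fact
  note [measurable] = assms(3-7,10)
  define N :: "('d \<times> nat \<times> real \<times> real) measure"
    where "N = restrict_space borel Xs \<Otimes>\<^sub>M count_space {0,1} \<Otimes>\<^sub>M (borel \<Otimes>\<^sub>M borel)"
  define Z where "Z = (\<lambda>\<omega>. (X \<omega>, T \<omega>, Y0 \<omega>, Y1 \<omega>))"
  have Z: "Z \<in> M \<rightarrow>\<^sub>M N"
    unfolding Z_def N_def by measurable
  have indep: "indep_set {B -` A \<inter> space M | A. A \<in> sets (count_space UNIV)} {Z -` A \<inter> space M | A. A \<in> sets N}"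
    using assms(8) unfolding Z_def N_def .
  have S: "S \<in> M \<rightarrow>\<^sub>M count_space {0,1}" and S': "(\<lambda>\<omega>. 1 - S \<omega>) \<in> M \<rightarrow>\<^sub>M count_space {0,1}"
    unfolding S_def by measurable
  have "1 - S \<omega> = (if \<not> B \<omega> then T \<omega> else 1 - T \<omega>)" if "\<omega> \<in> space M" for \<omega>
    using measurable_space[OF assms(4) that] by (auto simp: S_def)
  then have counterfactual:
    "sq_loss (triple_law M Xs X (\<lambda>\<omega>. 1 - S \<omega>) (po Y0 Y1 (\<lambda>\<omega>. 1 - S \<omega>))) h
      = (\<integral>\<^sup>+ \<omega>. coin_sq_loss h (\<not> B \<omega>, Z \<omega>) \<partial>M)"
    unfolding Z_def by (intro sq_loss_triple_law_coin[OF assms(3) S' assms(5,6,10)])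
  have factual: "sq_loss (triple_law M Xs X S (po Y0 Y1 S)) h = (\<integral>\<^sup>+ \<omega>. coin_sq_loss h (B \<omega>, Z \<omega>) \<partial>M)"
    unfolding Z_def by (intro sq_loss_triple_law_coin[OF assms(3) S assms(5,6,10)]) (simp add: S_def)
  show ?thesis
    unfolding factual counterfactual
    using nn_integral_Not_eq_if_fair_indep[OF assms(7) Z indep assms(9)]
      borel_measurable_coin_sq_loss[OF assms(10), folded N_def]
    by simp
qed

end
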